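(* QEPmin is in the hard case if and only if $g_0\perp\mathcal U$ and $\|(H-\lambda_{\min}(H)I)^{\dagger}g_0\|_2\le\gamma$, where $\lambda_{\min}(H)$ is the smallest eigenvalue of $H$ and $\mathcal U$ is the eigenspace of $H$ associated with $\lambda_{\min}(H)$.
   Context: Let $A\in\mathbb{R}^{n\times n}$ be symmetric, $C\in\mathbb{R}^{n\times m}$ ($m<n$) full column rank, $b\in\mathbb{R}^m$, $n_0=C(C^{\top}C)^{-1}b$ with $\|n_0\|<1$, $\gamma=\sqrt{1-\|n_0\|^2}$, $P=I-C(C^{\top}C)^{-1}C^{\top}$ (orthogonal projector onto $\mathcal N(C^{\top})$), $b_0=PAn_0$, assumed nonzero. Let $S_1\in\mathbb{R}^{n\times(n-m)}$ have orthonormal columns spanning $\mathcal N(C^{\top})$, $H=S_1^{\top}AS_1$, $g_0=S_1^{\top}b_0$. $X^\dagger$ is the Moore–Penrose inverse. QEPmin: minimize $\lambda$ over pairs $(\lambda,z)$ with $\lambda\in\mathbb{R}$, $0\neq z\in\mathcal N(C^{\top})$ and $(PAP-\lambda I)^2z=\gamma^{-2}b_0b_0^{\top}z$. QEPmin is in the hard case if it has a minimizer $(\lambda_*,z_* )$ with $b_0^{\top}z_*=0$; otherwise in the easy case. *)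

theory Defs
  imports "HOL-Analysis.Analysis"
begin

definition is_mp_inverse :: "real^'n^'m \<Rightarrow> real^'m^'n \<Rightarrow> bool" where
  "is_mp_inverse X Y \<longleftrightarrow> X ** Y ** X = X \<and> Y ** X ** Y = Y \<and>
     transpose (X ** Y) = X ** Y \<and> transpose (Y ** X) = Y ** X"

definition mp_inverse :: "real^'n^'m \<Rightarrow> real^'m^'n" where
  "mp_inverse X = (THE Y. is_mp_inverse X Y)"

definition eigenvalues_of :: "real^'n^'n \<Rightarrow> real set" where
  "eigenvalues_of M = {l. \<exists>v. v \<noteq> 0 \<and> M *v v = l *\<^sub>R v}"

definition lambda_min :: "real^'n^'n \<Rightarrow> real" where
  "lambda_min M = Min (eigenvalues_of M)"

definition eigenspace_of :: "real^'n^'n \<Rightarrow> real \<Rightarrow> (real^'n) set" where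
  "eigenspace_of M lam = {v. M *v v = lam *\<^sub>R v}"

definition n0_of :: "real^'m^'n \<Rightarrow> real^'m \<Rightarrow> real^'n" where
  "n0_of C b = C *v (matrix_inv (transpose C ** C) *v b)"

definition gamma_of :: "real^'m^'n \<Rightarrow> real^'m \<Rightarrow> real" where
  "gamma_of C b = sqrt (1 - (norm (n0_of C b))\<^sup>2)"

definition P_of :: "real^'m^'n \<Rightarrow> real^'n^'n" where
  "P_of C = mat 1 - C ** matrix_inv (transpose C ** C) ** transpose C"

definition b0_of :: "real^'n^'n \<Rightarrow> real^'m^'n \<Rightarrow> real^'m \<Rightarrow> real^'n" where
  "b0_of A C b = P_of C *v (A *v n0_of C b)"

definition qep_feasible :: "real^'n^'n \<Rightarrow> real^'m^'n \<Rightarrow> real^'m \<Rightarrow> real \<Rightarrow> real^'n \<Rightarrow> bool" where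
  "qep_feasible A C b lam z \<longleftrightarrow>
     z \<noteq> 0 \<and> transpose C *v z = 0 \<and>
     (let M = P_of C ** A ** P_of C - lam *\<^sub>R mat 1; b0 = b0_of A C b in
       M *v (M *v z) = (1 / (gamma_of C b)\<^sup>2) *\<^sub>R ((b0 \<bullet> z) *\<^sub>R b0))"

definition qep_minimizer :: "real^'n^'n \<Rightarrow> real^'m^'n \<Rightarrow> real^'m \<Rightarrow> real \<Rightarrow> real^'n \<Rightarrow> bool" where
  "qep_minimizer A C b lam z \<longleftrightarrow>
     qep_feasible A C b lam z \<and> (\<forall>mu w. qep_feasible A C b mu w \<longrightarrow> lam \<le> mu)"

definition qep_hard_case :: "real^'n^'n \<Rightarrow> real^'m^'n \<Rightarrow> real^'m \<Rightarrow> bool" where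
  "qep_hard_case A C b \<longleftrightarrow>
     (\<exists>lam z. qep_minimizer A C b lam z \<and> b0_of A C b \<bullet> z = 0)"

end

(* Writing z = S1 y, QEPmin becomes (H - lam I)^2 y = gamma^-2 (g0^T y) g0 with H = S1^T A S1
   and g0 = S1^T b0. For lam < lambda_min(H) a solution exists iff
   phi(lam) = ||(H - lam I)^-1 g0|| equals gamma, and then g0^T y /= 0; at lam = lambda_min(H)
   every eigenvector orthogonal to g0 is a solution. So the hard case means that g0 is orthogonal
   to the eigenspace U and phi never takes the value gamma below lambda_min(H). Now phi is
   continuous and small far to the left. If g0 is not orthogonal to U, phi is unbounded near
   lambda_min(H); otherwise phi stays below ||(H - lambda_min(H) I)^+ g0|| and tends to it, and
   the intermediate value theorem decides whether gamma is attained. *)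

theory Submission
  imports Defs
begin

section \<open>Matrix facts and the smallest eigenvalue\<close>

lemma inner_matrix_vector_transpose:
  fixes M :: "real^'a^'b"
  shows "(M *v x) \<bullet> y = x \<bullet> (transpose M *v y)"
  by (metis dot_lmul_matrix inner_commute transpose_matrix_vector)

lemma symmetric_matrix_inner:
  fixes K :: "real^'k^'k"
  assumes "transpose K = K"
  shows "(K *v x) \<bullet> y = x \<bullet> (K *v y)"
  by (metis assms inner_matrix_vector_transpose)

lemma transpose_diff: "transpose (A - B :: real^'n^'m) = transpose A - transpose B"
  by (simp add: transpose_def vec_eq_iff)

lemma scaleR_mat_1_mult_vector [simp]: "((c::real) *\<^sub>R mat 1 :: real^'k^'k) *v x = c *\<^sub>R x"
  by (metis matrix_vector_mul_lid scaleR_matrix_vector_assoc)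

lemma shift_mult_vector: "((H::real^'k^'k) - c *\<^sub>R mat 1) *v x = H *v x - c *\<^sub>R x"
  by (simp add: matrix_vector_mult_diff_rdistrib)

lemma transpose_shift: "transpose ((H::real^'k^'k) - c *\<^sub>R mat 1) = transpose H - c *\<^sub>R mat 1"
  by (simp add: transpose_diff transpose_scalar)

lemma invertible_iff_ker:
  fixes A :: "real^'k^'k"
  shows "invertible A \<longleftrightarrow> (\<forall>x. A *v x = 0 \<longrightarrow> x = 0)"
  by (simp add: invertible_left_inverse matrix_left_invertible_ker)

lemma
  fixes A :: "'a::semiring_1^'k^'k"
  assumes "invertible A"
  shows matrix_inv_right: "A *v (matrix_inv A *v x) = x"
    and matrix_inv_left: "matrix_inv A *v (A *v x) = x"
proof -
  have "A ** matrix_inv A = mat 1 \<and> matrix_inv A ** A = mat 1"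
    using someI_ex[OF assms[unfolded invertible_def]] by (simp add: matrix_inv_def)
  thus "A *v (matrix_inv A *v x) = x" "matrix_inv A *v (A *v x) = x"
    by (simp_all add: matrix_vector_mul_assoc)
qed

lemma quadratic_nonneg_imp_linear_coeff_eq_0:
  fixes a c :: real
  assumes c: "0 \<le> c" and nonneg: "\<And>t. 0 \<le> 2 * t * a + t^2 * c"
  shows "a = 0"
proof -
  define t where "t = - a / (c + 1)"
  have a: "a = - t * (c + 1)" using c by (simp add: t_def field_simps)
  have "0 \<le> 2 * t * a + t^2 * c" by (rule nonneg)
  also have "\<dots> = - (t^2 * (c + 2))" by (simp add: a power2_eq_square algebra_simps)
  finally have "t^2 = 0" using c by (smt (verit) mult_pos_pos zero_less_power2 zero_le_power2)
  thus ?thesis using a by simp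
qed

lemma norm_le_norm_add_psd:
  fixes k w :: "'a::real_inner"
  assumes "0 \<le> w \<bullet> k" and "0 \<le> d"
  shows "norm k \<le> norm (k + d *\<^sub>R w)"
proof (rule power2_le_imp_le)
  have "(norm (k + d *\<^sub>R w))^2 = (norm k)^2 + 2 * d * (w \<bullet> k) + d^2 * (norm w)^2"
    by (simp add: power2_norm_eq_inner inner_add_left inner_add_right inner_commute[of k w]
        power2_eq_square[of d] algebra_simps)
  thus "(norm k)^2 \<le> (norm (k + d *\<^sub>R w))^2" using assms by simp
qed simp

lemma psd_quadratic_form_eq_0D:
  fixes K :: "real^'k^'k"
  assumes sym: "transpose K = K" and psd: "\<And>x. 0 \<le> x \<bullet> (K *v x)"
    and v: "v \<bullet> (K *v v) = 0"
  shows "K *v v = 0"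
proof -
  define w where "w = K *v v"
  have vw: "v \<bullet> (K *v w) = w \<bullet> w" using symmetric_matrix_inner[OF sym, of v w] w_def by simp
  have "0 \<le> 2 * t * (w \<bullet> w) + t^2 * (w \<bullet> (K *v w))" for t
  proof -
    have "0 \<le> (v + t *\<^sub>R w) \<bullet> (K *v (v + t *\<^sub>R w))" by (rule psd)
    also have "\<dots> = v \<bullet> (K *v v) + t * (v \<bullet> (K *v w)) + t * (w \<bullet> (K *v v)) + t^2 * (w \<bullet> (K *v w))"
      by (simp add: matrix_vector_right_distrib matrix_vector_mult_scaleR inner_add_left
          inner_add_right power2_eq_square algebra_simps)
    finally show ?thesis using v vw by (simp add: w_def algebra_simps)
  qed
  hence "w \<bullet> w = 0" by (rule quadratic_nonneg_imp_linear_coeff_eq_0[OF psd])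
  thus ?thesis by (simp add: w_def)
qed

lemma symmetric_min_eigenpair:
  fixes H :: "real^'k^'k"
  assumes sym: "transpose H = H"
  obtains mu v where "v \<noteq> 0" "H *v v = mu *\<^sub>R v" "\<And>x. mu * (x \<bullet> x) \<le> x \<bullet> (H *v x)"
proof -
  have cont: "continuous_on (sphere 0 1) (\<lambda>x::real^'k. x \<bullet> (H *v x))"
    by (intro continuous_intros linear_continuous_on bounded_linear_inner_right) (simp add: linear_linear)
  have "sphere (0::real^'k) 1 \<noteq> {}"
    using vector_choose_size[of 1] by (auto simp: sphere_def)
  then obtain v where v: "norm v = 1"
    and v_min: "\<And>y. norm y = 1 \<Longrightarrow> v \<bullet> (H *v v) \<le> y \<bullet> (H *v y)"
    using continuous_attains_inf[OF compact_sphere _ cont] by fastforce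
  define mu where "mu = v \<bullet> (H *v v)"
  have bound: "mu * (x \<bullet> x) \<le> x \<bullet> (H *v x)" for x
  proof (cases "x = 0")
    case False
    define y where "y = (1 / norm x) *\<^sub>R x"
    have "norm y = 1" using False by (simp add: y_def)
    hence "mu \<le> y \<bullet> (H *v y)" using v_min by (simp add: mu_def)
    also have "\<dots> = (x \<bullet> (H *v x)) / (norm x)^2"
      by (simp add: y_def matrix_vector_mult_scaleR power2_eq_square)
    finally show ?thesis using False by (simp add: field_simps power2_norm_eq_inner)
  qed simp
  define K where "K = H - mu *\<^sub>R mat 1"
  have K_sym: "transpose K = K" by (simp add: K_def transpose_shift sym)
  have K_psd: "0 \<le> x \<bullet> (K *v x)" for x
    using bound[of x] by (simp add: K_def shift_mult_vector inner_diff_right)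
  have "v \<bullet> (K *v v) = 0"
    using v by (simp add: K_def shift_mult_vector inner_diff_right mu_def power2_norm_eq_inner[symmetric])
  hence "H *v v = mu *\<^sub>R v"
    using psd_quadratic_form_eq_0D[OF K_sym K_psd] by (simp add: K_def shift_mult_vector)
  moreover have "v \<noteq> 0" using v by auto
  ultimately show ?thesis using that bound by blast
qed

lemma finite_eigenvalues_symmetric:
  fixes H :: "real^'k^'k"
  assumes sym: "transpose H = H"
  shows "finite (eigenvalues_of H)"
proof -
  let ?E = "eigenvalues_of H"
  define f where "f l = (SOME v. v \<noteq> 0 \<and> H *v v = l *\<^sub>R v)" for l
  have f: "f l \<noteq> 0 \<and> H *v f l = l *\<^sub>R f l" if "l \<in> ?E" for l
    using that unfolding eigenvalues_of_def f_def by (metis (mono_tags, lifting) mem_Collect_eq someI_ex)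
  have "inj_on f ?E"
  proof (rule inj_onI)
    fix l1 l2 assume l: "l1 \<in> ?E" "l2 \<in> ?E" "f l1 = f l2"
    hence "l1 *\<^sub>R f l1 = l2 *\<^sub>R f l1" using f by metis
    thus "l1 = l2" using f[OF l(1)] by simp
  qed
  moreover have "pairwise orthogonal (f ` ?E)"
  proof (rule pairwiseI)
    fix x y assume "x \<in> f ` ?E" "y \<in> f ` ?E" "x \<noteq> y"
    then obtain l1 l2 where l: "l1 \<in> ?E" "l2 \<in> ?E" "x = f l1" "y = f l2" "l1 \<noteq> l2" by blast
    have "l1 * (x \<bullet> y) = (H *v x) \<bullet> y" using f[OF l(1)] l(3) by simp
    also have "\<dots> = x \<bullet> (H *v y)" by (rule symmetric_matrix_inner[OF sym])
    also have "\<dots> = l2 * (x \<bullet> y)" using f[OF l(2)] l(4) by simp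
    finally show "orthogonal x y" using l(5) by (simp add: orthogonal_def)
  qed
  ultimately show ?thesis using finite_imageD pairwise_orthogonal_imp_finite by blast
qed

lemma lambda_min_eqI:
  fixes H :: "real^'k^'k"
  assumes sym: "transpose H = H" and v: "v \<noteq> 0" "H *v v = mu *\<^sub>R v"
    and bound: "\<And>x. mu * (x \<bullet> x) \<le> x \<bullet> (H *v x)"
  shows "lambda_min H = mu"
  unfolding lambda_min_def
proof (rule Min_eqI[OF finite_eigenvalues_symmetric[OF sym]])
  show "mu \<in> eigenvalues_of H" using v unfolding eigenvalues_of_def by blast
  fix l assume "l \<in> eigenvalues_of H"
  then obtain w where w: "w \<noteq> 0" "H *v w = l *\<^sub>R w" unfolding eigenvalues_of_def by blast
  have "mu * (w \<bullet> w) \<le> l * (w \<bullet> w)" using bound[of w] w by simp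
  thus "mu \<le> l" using w by simp
qed

lemma
  fixes H :: "real^'k^'k"
  assumes "transpose H = H"
  shows lambda_min_eigenvector: "\<exists>v. v \<noteq> 0 \<and> H *v v = lambda_min H *\<^sub>R v"
    and lambda_min_le_rayleigh: "lambda_min H * (x \<bullet> x) \<le> x \<bullet> (H *v x)"
  by (metis symmetric_min_eigenpair lambda_min_eqI assms)+

section \<open>The Moore--Penrose inverse of a symmetric matrix\<close>

lemma is_mp_inverse_unique:
  fixes X :: "real^'n^'m"
  assumes "is_mp_inverse X Y1" and "is_mp_inverse X Y2"
  shows "Y1 = Y2"
proof -
  note T = matrix_transpose_mul
  have a1: "X ** Y1 ** X = X" and a2: "Y1 ** X ** Y1 = Y1" and a3: "transpose (X ** Y1) = X ** Y1"
    and a4: "transpose (Y1 ** X) = Y1 ** X" using assms(1) by (auto simp: is_mp_inverse_def)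
  have b1: "X ** Y2 ** X = X" and b2: "Y2 ** X ** Y2 = Y2" and b3: "transpose (X ** Y2) = X ** Y2"
    and b4: "transpose (Y2 ** X) = Y2 ** X" using assms(2) by (auto simp: is_mp_inverse_def)
  have tX1: "transpose X = transpose X ** (X ** Y2)"
    by (metis b1 b3 T)
  have tX2: "transpose X = (Y1 ** X) ** transpose X"
    by (metis a1 a4 T matrix_mul_assoc)
  have "Y1 = Y1 ** (X ** Y1)" using a2 by (simp add: matrix_mul_assoc)
  also have "\<dots> = Y1 ** (transpose Y1 ** transpose X)" by (metis a3 T)
  also have "\<dots> = Y1 ** (transpose Y1 ** (transpose X ** (X ** Y2)))" using tX1 by metis
  also have "\<dots> = Y1 ** (transpose (X ** Y1) ** (X ** Y2))" by (simp add: T matrix_mul_assoc)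
  also have "\<dots> = Y1 ** X ** Y2" using a2 a3 by (simp add: matrix_mul_assoc)
  finally have Y1: "Y1 = Y1 ** X ** Y2" .
  have "Y2 = (Y2 ** X) ** Y2" using b2 by simp
  also have "\<dots> = (transpose X ** transpose Y2) ** Y2" by (metis b4 T)
  also have "\<dots> = (((Y1 ** X) ** transpose X) ** transpose Y2) ** Y2" using tX2 by metis
  also have "\<dots> = (Y1 ** X) ** (transpose (Y2 ** X) ** Y2)" by (simp add: T matrix_mul_assoc)
  also have "\<dots> = Y1 ** X ** Y2" using b2 b4 by (simp add: matrix_mul_assoc)
  finally show ?thesis using Y1 by simp
qed

lemma mp_inverse_eqI: "is_mp_inverse (X :: real^'n^'m) Y \<Longrightarrow> mp_inverse X = Y"
  unfolding mp_inverse_def by (blast intro: the_equality is_mp_inverse_unique)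

lemma subspace_matrix_kernel: "subspace {x. (M :: real^'a^'b) *v x = 0}"
  by (simp add: subspace_def matrix_vector_right_distrib matrix_vector_mult_scaleR)

lemma orthogonal_projector_exists:
  fixes U :: "(real^'k) set"
  assumes "subspace U"
  obtains Q :: "real^'k^'k"
  where "transpose Q = Q" and "\<And>v. Q *v v \<in> U" and "\<And>u. u \<in> U \<Longrightarrow> Q *v u = u"
proof -
  obtain B where "B \<subseteq> U" and orth: "pairwise orthogonal B" and unit: "\<And>x. x \<in> B \<Longrightarrow> norm x = 1"
    and span_B: "span B = U"
    using orthonormal_basis_subspace[OF assms] by metis
  define Q :: "real^'k^'k" where "Q = (\<chi> i j. \<Sum>b\<in>B. b$i * b$j)"
  have Q: "Q *v v = (\<Sum>b\<in>B. (b \<bullet> v) *\<^sub>R b)" for v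
    unfolding Q_def
    by (simp add: vec_eq_iff matrix_vector_mult_def inner_vec_def sum_component sum_distrib_left
        sum_distrib_right mult_ac sum.swap[of _ B])
  have Q_range: "Q *v v \<in> U" for v
    unfolding Q span_B[symmetric] by (intro span_sum span_scale span_base)
  moreover have "Q *v u = u" if "u \<in> U" for u
  proof -
    have "(\<Sum>b\<in>B. (b \<bullet> u) *\<^sub>R b) = (\<Sum>b\<in>B. (b \<bullet> u / (b \<bullet> b)) *\<^sub>R b)"
      using unit by (intro sum.cong) (simp_all add: norm_eq_1)
    moreover have "u - Q *v u \<in> span B" using that Q_range by (simp add: span_B subspace_diff assms)
    \<comment> \<open>\<open>u - Q u\<close> lies in \<open>span B\<close> and, by the Gram--Schmidt step, is orthogonal to it.\<close>
    ultimately have "orthogonal (u - Q *v u) (u - Q *v u)"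
      using Gram_Schmidt_step[OF orth, of "u - Q *v u" u] by (simp add: Q)
    thus ?thesis by (simp add: orthogonal_def)
  qed
  moreover have "transpose Q = Q" by (simp add: Q_def transpose_def vec_eq_iff mult.commute)
  ultimately show ?thesis using that by blast
qed

lemma symmetric_mult_eq_0_swap:
  fixes K Q :: "real^'k^'k"
  assumes "transpose K = K" and "transpose Q = Q" and KQ: "\<And>v. K *v (Q *v v) = 0"
  shows "Q *v (K *v v) = 0"
proof -
  have "(Q *v (K *v v)) \<bullet> y = v \<bullet> (K *v (Q *v y))" for y
    by (metis assms(1,2) symmetric_matrix_inner)
  from this[of "Q *v (K *v v)"] show ?thesis by (simp add: KQ)
qed

lemma add_kernel_projector_invertible:
  fixes K Q :: "real^'k^'k"
  assumes K_sym: "transpose K = K" and Q_sym: "transpose Q = Q"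
    and KQ: "\<And>v. K *v (Q *v v) = 0" and Q_ker: "\<And>u. K *v u = 0 \<Longrightarrow> Q *v u = u"
  shows "invertible (K + Q)"
  unfolding invertible_iff_ker
proof (intro allI impI)
  fix v assume "(K + Q) *v v = 0"
  hence KQv: "K *v v + Q *v v = 0" by (simp add: matrix_vector_mult_add_rdistrib)
  hence "Q *v (K *v v + Q *v v) = 0" by simp
  hence "Q *v v = 0"
    by (simp add: matrix_vector_right_distrib symmetric_mult_eq_0_swap[OF K_sym Q_sym KQ] Q_ker[OF KQ])
  thus "v = 0" using KQv Q_ker by force
qed

text \<open>The witness is \<open>(K + Q)\<^sup>-\<^sup>1 - Q\<close>, where \<open>Q\<close> projects orthogonally onto the kernel of \<open>K\<close>.\<close>
lemma mp_inverse_symmetric: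
  fixes K Q :: "real^'k^'k"
  assumes K_sym: "transpose K = K" and Q_sym: "transpose Q = Q"
    and KQ: "\<And>v. K *v (Q *v v) = 0" and Q_ker: "\<And>u. K *v u = 0 \<Longrightarrow> Q *v u = u"
  shows "K *v (mp_inverse K *v w) = w - Q *v w" and "Q *v (mp_inverse K *v w) = 0"
proof -
  have QK: "Q *v (K *v v) = 0" for v by (rule symmetric_mult_eq_0_swap[OF K_sym Q_sym KQ])
  have QQ: "Q *v (Q *v v) = Q *v v" for v by (rule Q_ker[OF KQ])
  have "invertible (K + Q)" by (rule add_kernel_projector_invertible[OF assms])
  define R where "R = matrix_inv (K + Q)"
  have R_right: "K *v (R *v w) + Q *v (R *v w) = w" for w
    using matrix_inv_right[OF \<open>invertible (K + Q)\<close>] by (simp add: R_def matrix_vector_mult_add_rdistrib)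
  have R_left: "R *v (K *v w) + R *v (Q *v w) = w" for w
    using matrix_inv_left[OF \<open>invertible (K + Q)\<close>, of w]
    by (simp add: R_def matrix_vector_mult_add_rdistrib matrix_vector_right_distrib)
  have QR: "Q *v (R *v w) = Q *v w" for w
    using arg_cong[OF R_right[of w], of "(*v) Q"] by (simp add: matrix_vector_right_distrib QK QQ)
  have RQ: "R *v (Q *v w) = Q *v w" for w
    using R_left[of "Q *v w"] by (simp add: KQ QQ)
  define Y where "Y = R - Q"
  have Y: "Y *v w = R *v w - Q *v w" for w by (simp add: Y_def matrix_vector_mult_diff_rdistrib)
  have KY: "K *v (Y *v w) = w - Q *v w" for w
    using R_right[of w] by (simp add: Y matrix_vector_mult_diff_distrib KQ QR algebra_simps)
  have YK: "Y *v (K *v w) = w - Q *v w" for w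
    using R_left[of w] by (simp add: Y QK RQ algebra_simps)
  have QY: "Q *v (Y *v w) = 0" for w
    by (simp add: Y matrix_vector_mult_diff_distrib QR QQ)
  have I_Q_sym: "transpose (mat 1 - Q) = mat 1 - Q" by (simp add: transpose_diff Q_sym)
  have "is_mp_inverse K Y"
    unfolding is_mp_inverse_def
  proof (intro conjI)
    show "K ** Y ** K = K"
      by (simp add: matrix_eq matrix_vector_mul_assoc[symmetric] KY QK)
    show "Y ** K ** Y = Y"
      by (simp add: matrix_eq matrix_vector_mul_assoc[symmetric] YK QY)
    have "K ** Y = mat 1 - Q"
      by (simp add: matrix_eq matrix_vector_mul_assoc[symmetric] KY matrix_vector_mult_diff_rdistrib)
    thus "transpose (K ** Y) = K ** Y" using I_Q_sym by simp
    have "Y ** K = mat 1 - Q"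
      by (simp add: matrix_eq matrix_vector_mul_assoc[symmetric] YK matrix_vector_mult_diff_rdistrib)
    thus "transpose (Y ** K) = Y ** K" using I_Q_sym by simp
  qed
  hence "mp_inverse K = Y" by (rule mp_inverse_eqI)
  thus "K *v (mp_inverse K *v w) = w - Q *v w" and "Q *v (mp_inverse K *v w) = 0"
    by (simp_all add: KY QY)
qed

lemma
  fixes K :: "real^'k^'k"
  assumes K_sym: "transpose K = K"
  shows mp_inverse_symmetric_solves:
      "(\<And>u. K *v u = 0 \<Longrightarrow> g \<bullet> u = 0) \<Longrightarrow> K *v (mp_inverse K *v g) = g"
    and mp_inverse_symmetric_orthogonal_kernel:
      "K *v u = 0 \<Longrightarrow> u \<bullet> (mp_inverse K *v w) = 0"
proof -
  obtain Q where Q_sym: "transpose Q = Q" and KQ: "\<And>v. K *v (Q *v v) = 0"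
    and Q_ker: "\<And>u. K *v u = 0 \<Longrightarrow> Q *v u = u"
    by (rule orthogonal_projector_exists[OF subspace_matrix_kernel]) blast
  note mp = mp_inverse_symmetric[OF K_sym Q_sym KQ Q_ker]
  show "K *v (mp_inverse K *v g) = g" if g: "\<And>u. K *v u = 0 \<Longrightarrow> g \<bullet> u = 0"
  proof -
    have "(Q *v g) \<bullet> (Q *v g) = g \<bullet> (Q *v (Q *v g))" by (rule symmetric_matrix_inner[OF Q_sym])
    also have "\<dots> = 0" using g KQ by blast
    finally show ?thesis by (simp add: mp)
  qed
  show "u \<bullet> (mp_inverse K *v w) = 0" if "K *v u = 0"
  proof -
    have "u \<bullet> (mp_inverse K *v w) = (Q *v u) \<bullet> (mp_inverse K *v w)" using Q_ker that by simp
    also have "\<dots> = 0" by (simp add: symmetric_matrix_inner[OF Q_sym] mp)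
    finally show ?thesis .
  qed
qed

section \<open>The secular function below the smallest eigenvalue\<close>

definition resolvent :: "real^'k^'k \<Rightarrow> real \<Rightarrow> real^'k^'k" where
  "resolvent H l = matrix_inv (H - l *\<^sub>R mat 1)"

definition qep_pair :: "real^'k^'k \<Rightarrow> real^'k \<Rightarrow> real \<Rightarrow> real \<Rightarrow> real^'k \<Rightarrow> bool" where
  "qep_pair H g gam lam y \<longleftrightarrow> y \<noteq> 0 \<and>
     (H - lam *\<^sub>R mat 1) *v ((H - lam *\<^sub>R mat 1) *v y) = (1 / gam\<^sup>2) *\<^sub>R ((g \<bullet> y) *\<^sub>R g)"

definition qep_hard :: "real^'k^'k \<Rightarrow> real^'k \<Rightarrow> real \<Rightarrow> bool" where
  "qep_hard H g gam \<longleftrightarrow>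
     (\<exists>lam y. qep_pair H g gam lam y \<and> (\<forall>mu w. qep_pair H g gam mu w \<longrightarrow> lam \<le> mu) \<and> g \<bullet> y = 0)"

context
  fixes H :: "real^'k^'k"
  assumes sym: "transpose H = H"
begin

lemma shift_inner: "(H *v x - l *\<^sub>R x) \<bullet> y = x \<bullet> (H *v y - l *\<^sub>R y)"
  using symmetric_matrix_inner[OF sym, of x y] by (simp add: inner_diff_left inner_diff_right)

lemma lambda_min_shift_psd: "0 \<le> x \<bullet> (H *v x - lambda_min H *\<^sub>R x)"
  using lambda_min_le_rayleigh[OF sym, of x] by (simp add: inner_diff_right)

lemma lambda_min_shift_lower_bound:
  assumes "l < lambda_min H"
  shows "(lambda_min H - l) * norm x \<le> norm (H *v x - l *\<^sub>R x)"
proof (cases "x = 0")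
  case False
  have "(lambda_min H - l) * (x \<bullet> x) \<le> x \<bullet> (H *v x - l *\<^sub>R x)"
    using lambda_min_le_rayleigh[OF sym, of x] by (simp add: inner_diff_right algebra_simps)
  also have "\<dots> \<le> norm x * norm (H *v x - l *\<^sub>R x)" by (rule norm_cauchy_schwarz)
  finally have "(lambda_min H - l) * norm x * norm x \<le> norm (H *v x - l *\<^sub>R x) * norm x"
    by (simp add: power2_norm_eq_inner[symmetric] power2_eq_square mult_ac)
  thus ?thesis using False by simp
qed simp

lemma shift_invertible:
  assumes l: "l < lambda_min H"
  shows "invertible (H - l *\<^sub>R mat 1)"
  unfolding invertible_iff_ker shift_mult_vector
proof (intro allI impI)
  fix x assume "H *v x - l *\<^sub>R x = 0"
  hence "(lambda_min H - l) * norm x \<le> 0" using lambda_min_shift_lower_bound[OF l, of x] by simp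
  thus "x = 0" using l by (simp add: mult_le_0_iff)
qed

lemma resolvent_solves:
  assumes "l < lambda_min H"
  shows "H *v (resolvent H l *v g) - l *\<^sub>R (resolvent H l *v g) = g"
  using matrix_inv_right[OF shift_invertible[OF assms]] by (simp add: resolvent_def shift_mult_vector)

lemma resolvent_unique:
  assumes "l < lambda_min H" and "H *v x - l *\<^sub>R x = g"
  shows "resolvent H l *v g = x"
  using matrix_inv_left[OF shift_invertible[OF assms(1)], of x] assms(2)
  by (simp add: resolvent_def shift_mult_vector)

lemma qep_pair_below_lambda_min:
  assumes gam: "0 < gam" and l: "l < lambda_min H" and pair: "qep_pair H g gam l y"
  shows "g \<bullet> y \<noteq> 0" and "norm (resolvent H l *v g) = gam"
proof -
  define z where "z = H *v y - l *\<^sub>R y"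
  have y: "y \<noteq> 0" and z: "H *v z - l *\<^sub>R z = (1 / gam\<^sup>2) *\<^sub>R ((g \<bullet> y) *\<^sub>R g)"
    using pair by (simp_all add: qep_pair_def shift_mult_vector z_def)
  have "z \<noteq> 0" using resolvent_unique[OF l, of y 0] y by (auto simp: z_def)
  show gy: "g \<bullet> y \<noteq> 0"
  proof
    assume "g \<bullet> y = 0"
    thus False using resolvent_unique[OF l, of z 0] z \<open>z \<noteq> 0\<close> by simp
  qed
  define c where "c = (g \<bullet> y) / gam^2"
  have c: "c \<noteq> 0" using gy gam by (simp add: c_def)
  have "resolvent H l *v g = (1 / c) *\<^sub>R z"
    using z c by (intro resolvent_unique[OF l]) (simp add: matrix_vector_mult_scaleR c_def algebra_simps)
  hence "(norm (resolvent H l *v g))^2 = (1 / c)^2 * (z \<bullet> z)"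
    by (simp add: power2_eq_square flip: power2_norm_eq_inner)
  also have "z \<bullet> z = y \<bullet> (H *v z - l *\<^sub>R z)" using shift_inner[of y l z] by (simp add: z_def)
  also have "\<dots> = c * (g \<bullet> y)" using z by (simp add: c_def inner_commute)
  also have "(1 / c)^2 * (c * (g \<bullet> y)) = gam^2" using c gy gam by (simp add: c_def power2_eq_square field_simps)
  finally show "norm (resolvent H l *v g) = gam" using gam by (simp add: power2_eq_iff_nonneg)
qed

lemma qep_pair_of_resolvent_norm:
  assumes gam: "0 < gam" and l: "l < lambda_min H" and norm: "norm (resolvent H l *v g) = gam"
  shows "qep_pair H g gam l (resolvent H l *v (resolvent H l *v g))"
proof -
  define x where "x = resolvent H l *v g"
  define y where "y = resolvent H l *v x"
  have x: "H *v x - l *\<^sub>R x = g" and y: "H *v y - l *\<^sub>R y = x"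
    using resolvent_solves[OF l] by (simp_all add: x_def y_def)
  have "g \<bullet> y = x \<bullet> x" using shift_inner[of x l y] x y by simp
  also have "\<dots> = gam^2" using norm by (simp add: x_def flip: power2_norm_eq_inner)
  finally have "g \<bullet> y = gam^2" .
  moreover have "y \<noteq> 0" using y norm gam x_def by auto
  ultimately show ?thesis
    using x y gam by (simp add: qep_pair_def shift_mult_vector flip: x_def y_def)
qed

lemma resolvent_norm_lipschitz:
  assumes b: "b < lambda_min H"
  shows "(norm g / (lambda_min H - b)^2)-lipschitz_on {..b} (\<lambda>l. norm (resolvent H l *v g))"
proof (rule lipschitz_onI)
  define d where "d = lambda_min H - b"
  have d: "0 < d" using b d_def by simp
  show "0 \<le> norm g / (lambda_min H - b)^2" by simp
  fix l1 l2 assume l: "l1 \<in> {..b}" "l2 \<in> {..b}"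
  have l1: "l1 < lambda_min H" and l2: "l2 < lambda_min H" using l b by auto
  define x1 where "x1 = resolvent H l1 *v g"
  define x2 where "x2 = resolvent H l2 *v g"
  have x1: "H *v x1 - l1 *\<^sub>R x1 = g" and x2: "H *v x2 - l2 *\<^sub>R x2 = g"
    using resolvent_solves l1 l2 by (simp_all add: x1_def x2_def)
  have "H *v (x1 - x2) - l1 *\<^sub>R (x1 - x2) = (l1 - l2) *\<^sub>R x2"
    using x1 x2 by (simp add: matrix_vector_mult_diff_distrib algebra_simps)
  hence "(lambda_min H - l1) * norm (x1 - x2) \<le> \<bar>l1 - l2\<bar> * norm x2"
    using lambda_min_shift_lower_bound[OF l1, of "x1 - x2"] by simp
  moreover have "(lambda_min H - l2) * norm x2 \<le> norm g"
    using lambda_min_shift_lower_bound[OF l2, of x2] x2 by simp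
  moreover have "d \<le> lambda_min H - l1" and "d \<le> lambda_min H - l2" using l d_def by auto
  ultimately have "d * norm (x1 - x2) \<le> \<bar>l1 - l2\<bar> * norm x2" and "d * norm x2 \<le> norm g"
    by (smt (verit) mult_right_mono norm_ge_zero)+
  hence "d * (d * norm (x1 - x2)) \<le> \<bar>l1 - l2\<bar> * norm g"
    using d by (smt (verit) abs_ge_zero mult_left_mono mult.left_commute)
  hence "norm (x1 - x2) \<le> norm g / d^2 * \<bar>l1 - l2\<bar>"
    using d by (simp add: field_simps power2_eq_square)
  moreover have "dist (norm x1) (norm x2) \<le> norm (x1 - x2)"
    by (simp add: dist_real_def norm_triangle_ineq3)
  ultimately show "dist (norm (resolvent H l1 *v g)) (norm (resolvent H l2 *v g))
      \<le> norm g / (lambda_min H - b)^2 * dist l1 l2"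
    by (simp add: x1_def x2_def d_def dist_real_def)
qed

lemma resolvent_norm_attains:
  assumes gam: "0 < gam" and b: "b < lambda_min H" and ge: "gam \<le> norm (resolvent H b *v g)"
  obtains l where "l < lambda_min H" and "norm (resolvent H l *v g) = gam"
proof -
  \<comment> \<open>Far below \<open>\<lambda>\<^sub>m\<^sub>i\<^sub>n\<close> the resolvent is small, so the intermediate value theorem applies.\<close>
  define a where "a = min b (lambda_min H - norm g / gam - 1)"
  have "a \<le> b" and a: "a < lambda_min H" using b by (auto simp: a_def)
  have "norm (resolvent H a *v g) \<le> gam"
  proof (rule ccontr)
    define x where "x = resolvent H a *v g"
    assume "\<not> norm (resolvent H a *v g) \<le> gam"
    hence "gam < norm x" by (simp add: x_def)
    hence "(norm g / gam + 1) * gam < (norm g / gam + 1) * norm x"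
      using gam by (intro mult_strict_left_mono) (auto intro: add_nonneg_pos)
    also have "\<dots> \<le> (lambda_min H - a) * norm x" by (intro mult_right_mono) (auto simp: a_def)
    also have "\<dots> \<le> norm g"
      using lambda_min_shift_lower_bound[OF a, of x] resolvent_solves[OF a] by (simp add: x_def)
    finally show False using gam by (simp add: field_simps)
  qed
  moreover have "continuous_on {a..b} (\<lambda>l. norm (resolvent H l *v g))"
    using lipschitz_on_continuous_on[OF resolvent_norm_lipschitz[OF b]] by (rule continuous_on_subset) auto
  ultimately obtain l where "a \<le> l" "l \<le> b" "norm (resolvent H l *v g) = gam"
    using IVT'[of "\<lambda>l. norm (resolvent H l *v g)"] ge \<open>a \<le> b\<close> by blast
  with b show ?thesis by (intro that[of l]) auto
qed

lemma resolvent_norm_unbounded: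
  assumes c: "0 < c" and u: "H *v u = lambda_min H *\<^sub>R u" and gu: "g \<bullet> u \<noteq> 0"
  obtains b where "b < lambda_min H" and "c \<le> norm (resolvent H b *v g)"
proof -
  have u0: "u \<noteq> 0" using gu by auto
  define d where "d = \<bar>g \<bullet> u\<bar> / (c * norm u)"
  have d: "0 < d" using gu u0 c by (simp add: d_def)
  define x where "x = resolvent H (lambda_min H - d) *v g"
  have "H *v x - (lambda_min H - d) *\<^sub>R x = g"
    using resolvent_solves d by (simp add: x_def)
  hence "g \<bullet> u = x \<bullet> (H *v u - (lambda_min H - d) *\<^sub>R u)"
    using shift_inner by metis
  also have "\<dots> = d * (x \<bullet> u)" using u by (simp add: algebra_simps)
  finally have "\<bar>g \<bullet> u\<bar> \<le> d * (norm x * norm u)"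
    using d by (simp add: abs_mult Cauchy_Schwarz_ineq2 mult_left_mono)
  also have "\<dots> = \<bar>g \<bullet> u\<bar> * (norm x / c)" using u0 by (simp add: d_def)
  finally have "c \<le> norm x" using gu c by (simp add: field_simps)
  moreover have "lambda_min H - d < lambda_min H" using d by simp
  ultimately show ?thesis using that x_def by blast
qed

lemma lambda_min_shift_bounded_below_orthogonal:
  obtains e where "0 < e"
    and "\<And>x. (\<And>u. H *v u = lambda_min H *\<^sub>R u \<Longrightarrow> u \<bullet> x = 0) \<Longrightarrow>
          e * norm x \<le> norm (H *v x - lambda_min H *\<^sub>R x)"
proof -
  define W where "W = {x. \<forall>u. H *v u = lambda_min H *\<^sub>R u \<longrightarrow> u \<bullet> x = 0}"
  have W: "subspace W" unfolding subspace_def W_def by (simp add: inner_add_right)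
  have "\<exists>e>0. \<forall>x\<in>W. e * norm x \<le> norm ((H - lambda_min H *\<^sub>R mat 1) *v x)"
  proof (rule injective_imp_isometric[OF closed_subspace[OF W] W])
    show "\<forall>x\<in>W. (H - lambda_min H *\<^sub>R mat 1) *v x = 0 \<longrightarrow> x = 0"
      by (auto simp: W_def shift_mult_vector)
  qed simp
  thus ?thesis using that by (auto simp: W_def shift_mult_vector)
qed

lemma resolvent_norm_approaches_solution_norm:
  assumes x0: "H *v x0 - lambda_min H *\<^sub>R x0 = g"
    and x0_orth: "\<And>u. H *v u = lambda_min H *\<^sub>R u \<Longrightarrow> u \<bullet> x0 = 0"
    and c: "0 \<le> c" "c < norm x0"
  obtains b where "b < lambda_min H" and "c \<le> norm (resolvent H b *v g)"
proof -
  obtain e where e: "0 < e"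
    and e_bound: "\<And>x. (\<And>u. H *v u = lambda_min H *\<^sub>R u \<Longrightarrow> u \<bullet> x = 0) \<Longrightarrow>
          e * norm x \<le> norm (H *v x - lambda_min H *\<^sub>R x)"
    using lambda_min_shift_bounded_below_orthogonal by blast
  define d where "d = e * (norm x0 - c) / norm x0"
  have d: "0 < d" unfolding d_def using e c by (intro divide_pos_pos mult_pos_pos) auto
  define x where "x = resolvent H (lambda_min H - d) *v g"
  define w where "w = x0 - x"
  have x: "H *v x - (lambda_min H - d) *\<^sub>R x = g" using resolvent_solves d by (simp add: x_def)
  have w: "(H *v w - lambda_min H *\<^sub>R w) + d *\<^sub>R w = d *\<^sub>R x0"
    using x x0 by (simp add: w_def matrix_vector_mult_diff_distrib algebra_simps)
  \<comment> \<open>\<open>w\<close> is orthogonal to the eigenspace, where \<open>H - \<lambda>\<^sub>m\<^sub>i\<^sub>n I\<close> is bounded below by \<open>e\<close>; so \<open>e \<parallel>w\<parallel> \<le> d \<parallel>x0\<parallel>\<close>.\<close>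
  have "u \<bullet> w = 0" if u: "H *v u = lambda_min H *\<^sub>R u" for u
  proof -
    have "u \<bullet> (H *v w - lambda_min H *\<^sub>R w) = 0" using shift_inner[of u "lambda_min H" w] u by simp
    hence "d * (u \<bullet> w) = u \<bullet> (d *\<^sub>R x0)" using w by (metis inner_add_right inner_scaleR_right add_0)
    thus ?thesis using x0_orth[OF u] d by simp
  qed
  hence "e * norm w \<le> norm (H *v w - lambda_min H *\<^sub>R w)" by (rule e_bound)
  also have "\<dots> \<le> norm (H *v w - lambda_min H *\<^sub>R w + d *\<^sub>R w)"
    using lambda_min_shift_psd[of w] d by (intro norm_le_norm_add_psd) auto
  also have "\<dots> = d * norm x0" using w d by simp
  also have "\<dots> = e * (norm x0 - c)" using c by (auto simp: d_def)
  finally have "norm w \<le> norm x0 - c" using e by simp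
  moreover have "norm x0 - norm x \<le> norm w" unfolding w_def by (rule norm_triangle_ineq2)
  ultimately have "c \<le> norm x" by linarith
  moreover have "lambda_min H - d < lambda_min H" using d by simp
  ultimately show ?thesis using that x_def by blast
qed

lemma resolvent_norm_less:
  assumes g: "g \<noteq> 0" and x0: "H *v x0 - lambda_min H *\<^sub>R x0 = g" and l: "l < lambda_min H"
  shows "norm (resolvent H l *v g) < norm x0"
proof -
  define x where "x = resolvent H l *v g"
  define w where "w = x0 - x"
  have x: "H *v x - l *\<^sub>R x = g" using resolvent_solves[OF l] by (simp add: x_def)
  have w: "H *v w - lambda_min H *\<^sub>R w = (lambda_min H - l) *\<^sub>R x"
    using x x0 by (simp add: w_def matrix_vector_mult_diff_distrib algebra_simps)
  have "0 \<le> w \<bullet> x" using lambda_min_shift_psd[of w] l by (simp add: w zero_le_mult_iff)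
  have "w \<noteq> 0" using w x g l by auto
  hence "0 < (norm w)^2" by simp
  have "(norm x0)^2 = (norm x)^2 + 2 * (w \<bullet> x) + (norm w)^2"
    by (simp add: w_def power2_norm_eq_inner inner_commute algebra_simps)
  hence "(norm x)^2 < (norm x0)^2" using \<open>0 \<le> w \<bullet> x\<close> \<open>0 < (norm w)^2\<close> by linarith
  thus ?thesis by (simp add: x_def power_less_imp_less_base)
qed

lemma qep_hard_iff_no_root:
  assumes gam: "0 < gam"
  shows "qep_hard H g gam \<longleftrightarrow> (\<forall>u \<in> eigenspace_of H (lambda_min H). g \<bullet> u = 0) \<and>
    (\<forall>l < lambda_min H. norm (resolvent H l *v g) \<noteq> gam)"
proof
  assume "qep_hard H g gam"
  then obtain lam y where pair: "qep_pair H g gam lam y"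
    and min: "\<And>mu w. qep_pair H g gam mu w \<Longrightarrow> lam \<le> mu" and "g \<bullet> y = 0"
    unfolding qep_hard_def by blast
  hence "lambda_min H \<le> lam" using qep_pair_below_lambda_min(1)[OF gam _ pair] by force
  have no_root: "\<forall>l < lambda_min H. norm (resolvent H l *v g) \<noteq> gam"
  proof (intro allI impI notI)
    fix l assume l: "l < lambda_min H" "norm (resolvent H l *v g) = gam"
    hence "lam \<le> l" using min qep_pair_of_resolvent_norm[OF gam] by blast
    thus False using \<open>lambda_min H \<le> lam\<close> l by linarith
  qed
  moreover have "g \<bullet> u = 0" if "u \<in> eigenspace_of H (lambda_min H)" for u
  proof (rule ccontr)
    assume "g \<bullet> u \<noteq> 0"
    moreover have "H *v u = lambda_min H *\<^sub>R u" using that by (simp add: eigenspace_of_def)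
    ultimately obtain b where "b < lambda_min H" "gam \<le> norm (resolvent H b *v g)"
      using resolvent_norm_unbounded[OF gam] by blast
    then obtain l where "l < lambda_min H" "norm (resolvent H l *v g) = gam"
      using resolvent_norm_attains[OF gam] by blast
    thus False using no_root by blast
  qed
  ultimately show "(\<forall>u \<in> eigenspace_of H (lambda_min H). g \<bullet> u = 0) \<and>
    (\<forall>l < lambda_min H. norm (resolvent H l *v g) \<noteq> gam)" by blast
next
  assume "(\<forall>u \<in> eigenspace_of H (lambda_min H). g \<bullet> u = 0) \<and>
    (\<forall>l < lambda_min H. norm (resolvent H l *v g) \<noteq> gam)"
  hence orth: "\<And>u. H *v u = lambda_min H *\<^sub>R u \<Longrightarrow> g \<bullet> u = 0"
    and no_root: "\<And>l. l < lambda_min H \<Longrightarrow> norm (resolvent H l *v g) \<noteq> gam"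
    by (auto simp: eigenspace_of_def)
  obtain u where u: "u \<noteq> 0" "H *v u = lambda_min H *\<^sub>R u" using lambda_min_eigenvector[OF sym] by blast
  \<comment> \<open>Every feasible pair below \<open>\<lambda>\<^sub>m\<^sub>i\<^sub>n\<close> would be a root, so \<open>(\<lambda>\<^sub>m\<^sub>i\<^sub>n, u)\<close> is a minimizer.\<close>
  have "qep_pair H g gam (lambda_min H) u" using u orth by (simp add: qep_pair_def shift_mult_vector)
  moreover have "lambda_min H \<le> mu" if "qep_pair H g gam mu w" for mu w
    using qep_pair_below_lambda_min(2)[OF gam _ that] no_root by force
  ultimately show "qep_hard H g gam" using orth[OF u(2)] unfolding qep_hard_def by blast
qed

lemma no_root_iff_mp_inverse_norm:
  assumes gam: "0 < gam" and g: "g \<noteq> 0"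
    and orth: "\<forall>u \<in> eigenspace_of H (lambda_min H). g \<bullet> u = 0"
  shows "(\<forall>l < lambda_min H. norm (resolvent H l *v g) \<noteq> gam) \<longleftrightarrow>
    norm (mp_inverse (H - lambda_min H *\<^sub>R mat 1) *v g) \<le> gam"
proof -
  define x0 where "x0 = mp_inverse (H - lambda_min H *\<^sub>R mat 1) *v g"
  have K_sym: "transpose (H - lambda_min H *\<^sub>R mat 1) = H - lambda_min H *\<^sub>R mat 1"
    by (simp add: transpose_shift sym)
  have x0: "H *v x0 - lambda_min H *\<^sub>R x0 = g"
    using mp_inverse_symmetric_solves[OF K_sym] orth
    by (simp add: x0_def shift_mult_vector eigenspace_of_def)
  have x0_orth: "\<And>u. H *v u = lambda_min H *\<^sub>R u \<Longrightarrow> u \<bullet> x0 = 0"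
    using mp_inverse_symmetric_orthogonal_kernel[OF K_sym] by (simp add: x0_def shift_mult_vector)
  show ?thesis unfolding x0_def[symmetric]
  proof
    assume no_root: "\<forall>l < lambda_min H. norm (resolvent H l *v g) \<noteq> gam"
    show "norm x0 \<le> gam"
    proof (rule ccontr)
      assume "\<not> norm x0 \<le> gam"
      then obtain b where "b < lambda_min H" "gam \<le> norm (resolvent H b *v g)"
        using resolvent_norm_approaches_solution_norm[OF x0 x0_orth, of gam] gam by force
      then obtain l where "l < lambda_min H" "norm (resolvent H l *v g) = gam"
        using resolvent_norm_attains[OF gam] by blast
      thus False using no_root by blast
    qed
  next
    assume "norm x0 \<le> gam"
    thus "\<forall>l < lambda_min H. norm (resolvent H l *v g) \<noteq> gam"
      using resolvent_norm_less[OF g x0] by force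
  qed
qed

lemma qep_hard_iff:
  assumes "0 < gam" and "g \<noteq> 0"
  shows "qep_hard H g gam \<longleftrightarrow> (\<forall>u \<in> eigenspace_of H (lambda_min H). g \<bullet> u = 0) \<and>
    norm (mp_inverse (H - lambda_min H *\<^sub>R mat 1) *v g) \<le> gam"
  using qep_hard_iff_no_root[OF assms(1)] no_root_iff_mp_inverse_norm[OF assms] by blast

end

section \<open>Reduction of QEPmin to the null space of \<open>C\<^sup>T\<close>\<close>

lemma orthogonal_projection_unique:
  fixes V :: "'a::real_inner set"
  assumes "subspace V" and "p \<in> V" and "q \<in> V"
    and "\<And>v. v \<in> V \<Longrightarrow> (x - p) \<bullet> v = 0" and "\<And>v. v \<in> V \<Longrightarrow> (x - q) \<bullet> v = 0"
  shows "p = q"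
proof -
  have "p - q \<in> V" using assms(1-3) by (rule subspace_diff)
  have "(p - q) \<bullet> (p - q) = (x - q) \<bullet> (p - q) - (x - p) \<bullet> (p - q)" by (simp add: algebra_simps)
  also have "\<dots> = 0" using assms(4,5) \<open>p - q \<in> V\<close> by simp
  finally show ?thesis by simp
qed

lemma orthonormal_columns_left_inverse:
  fixes S :: "real^'k^'n"
  assumes "transpose S ** S = mat 1"
  shows "transpose S *v (S *v y) = y"
  by (metis assms matrix_vector_mul_assoc matrix_vector_mul_lid)

lemma orthonormal_columns_inner:
  fixes S :: "real^'k^'n"
  assumes "transpose S ** S = mat 1"
  shows "(S *v x) \<bullet> (S *v y) = x \<bullet> y"
  by (metis assms inner_matrix_vector_transpose matrix_vector_mul_assoc matrix_vector_mul_lid)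

lemma gram_matrix_invertible:
  fixes C :: "real^'m^'n"
  assumes "rank C = CARD('m)"
  shows "invertible (transpose C ** C)"
  unfolding invertible_iff_ker
proof (intro allI impI)
  fix x assume "(transpose C ** C) *v x = 0"
  hence "(C *v x) \<bullet> (C *v x) = 0"
    by (metis inner_matrix_vector_transpose inner_zero_right matrix_vector_mul_assoc)
  hence "C *v x = 0" by simp
  thus "x = 0" using assms full_rank_injective[of C] by (metis inj_eq matrix_vector_mult_0_right)
qed

lemma P_of_eq_orthonormal_basis:
  fixes C :: "real^'m^'n" and S1 :: "real^'k^'n"
  assumes rank: "rank C = CARD('m)" and orth: "transpose S1 ** S1 = mat 1"
    and range: "range (\<lambda>y. S1 *v y) = {x. transpose C *v x = 0}"
  shows "P_of C *v x = S1 *v (transpose S1 *v x)"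
proof (rule orthogonal_projection_unique[OF subspace_matrix_kernel[of "transpose C"]])
  define r where "r = matrix_inv (transpose C ** C) *v (transpose C *v x)"
  have P: "P_of C *v x = x - C *v r"
    by (simp add: P_of_def r_def matrix_vector_mult_diff_rdistrib matrix_vector_mul_assoc matrix_mul_assoc
        del: transpose_matrix_vector)
  have "transpose C *v (C *v r) = transpose C *v x"
    using matrix_inv_right[OF gram_matrix_invertible[OF rank], of "transpose C *v x"]
    by (simp add: r_def matrix_vector_mul_assoc matrix_mul_assoc)
  thus "P_of C *v x \<in> {x. transpose C *v x = 0}"
    by (simp add: P matrix_vector_mult_diff_distrib del: transpose_matrix_vector)
  show "S1 *v (transpose S1 *v x) \<in> {x. transpose C *v x = 0}" unfolding range[symmetric] by blast
  show "(x - P_of C *v x) \<bullet> v = 0" if "v \<in> {x. transpose C *v x = 0}" for v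
    using that by (simp add: P inner_matrix_vector_transpose)
  show "(x - S1 *v (transpose S1 *v x)) \<bullet> v = 0" if "v \<in> {x. transpose C *v x = 0}" for v
  proof -
    obtain y where v: "v = S1 *v y" using \<open>v \<in> {x. transpose C *v x = 0}\<close> unfolding range[symmetric] by blast
    have "x \<bullet> (S1 *v y) = (transpose S1 *v x) \<bullet> y"
      by (metis inner_commute inner_matrix_vector_transpose)
    thus ?thesis by (simp add: v inner_diff_left orthonormal_columns_inner[OF orth])
  qed
qed

lemma b0_of_eq_orthonormal_basis:
  fixes C :: "real^'m^'n" and S1 :: "real^'k^'n"
  assumes "rank C = CARD('m)" and orth: "transpose S1 ** S1 = mat 1"
    and "range (\<lambda>y. S1 *v y) = {x. transpose C *v x = 0}"
  shows "b0_of A C b = S1 *v (transpose S1 *v b0_of A C b)"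
  by (simp add: b0_of_def P_of_eq_orthonormal_basis[OF assms] orthonormal_columns_left_inverse[OF orth]
      del: transpose_matrix_vector)

lemma qep_feasible_iff_qep_pair:
  fixes A :: "real^'n^'n" and C :: "real^'m^'n" and S1 :: "real^'k^'n"
  assumes "rank C = CARD('m)" and orth: "transpose S1 ** S1 = mat 1"
    and range: "range (\<lambda>y. S1 *v y) = {x. transpose C *v x = 0}"
  shows "qep_feasible A C b lam z \<longleftrightarrow> (\<exists>y. z = S1 *v y \<and>
    qep_pair (transpose S1 ** A ** S1) (transpose S1 *v b0_of A C b) (gamma_of C b) lam y)"
proof -
  define H where "H = transpose S1 ** A ** S1"
  define g0 where "g0 = transpose S1 *v b0_of A C b"
  note StS = orthonormal_columns_left_inverse[OF orth]
  have P: "P_of C *v x = S1 *v (transpose S1 *v x)" for x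
    by (rule P_of_eq_orthonormal_basis[OF assms])
  have b0: "b0_of A C b = S1 *v g0"
    unfolding g0_def by (rule b0_of_eq_orthonormal_basis[OF assms])
  have shift: "(P_of C ** A ** P_of C - lam *\<^sub>R mat 1) *v (S1 *v y) = S1 *v ((H - lam *\<^sub>R mat 1) *v y)" for y
    by (simp add: shift_mult_vector matrix_vector_mul_assoc[symmetric] P StS H_def
        matrix_vector_mult_diff_distrib matrix_vector_mult_scaleR del: transpose_matrix_vector)
  have pair: "qep_feasible A C b lam (S1 *v y) \<longleftrightarrow> qep_pair H g0 (gamma_of C b) lam y" for y
  proof -
    have "S1 *v y \<noteq> 0 \<longleftrightarrow> y \<noteq> 0" by (metis StS matrix_vector_mult_0_right)
    moreover have "transpose C *v (S1 *v y) = 0" using rangeI[of "\<lambda>y. S1 *v y" y] unfolding range by simp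
    moreover have "(1 / (gamma_of C b)\<^sup>2) *\<^sub>R ((b0_of A C b \<bullet> (S1 *v y)) *\<^sub>R b0_of A C b)
        = S1 *v ((1 / (gamma_of C b)\<^sup>2) *\<^sub>R ((g0 \<bullet> y) *\<^sub>R g0))"
      by (simp add: b0 orthonormal_columns_inner[OF orth] matrix_vector_mult_scaleR)
    moreover have "S1 *v u = S1 *v v \<longleftrightarrow> u = v" for u v by (metis StS)
    ultimately show ?thesis by (simp add: qep_feasible_def qep_pair_def Let_def shift)
  qed
  show ?thesis
    unfolding H_def[symmetric] g0_def[symmetric]
  proof
    assume feasible: "qep_feasible A C b lam z"
    hence "z \<in> {x. transpose C *v x = 0}" by (simp add: qep_feasible_def)
    then obtain y where "z = S1 *v y" unfolding range[symmetric] by blast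
    thus "\<exists>y. z = S1 *v y \<and> qep_pair H g0 (gamma_of C b) lam y" using feasible pair by blast
  qed (use pair in blast)
qed

lemma qep_hard_case_iff_qep_hard:
  fixes A :: "real^'n^'n" and C :: "real^'m^'n" and S1 :: "real^'k^'n"
  assumes "rank C = CARD('m)" and orth: "transpose S1 ** S1 = mat 1"
    and "range (\<lambda>y. S1 *v y) = {x. transpose C *v x = 0}"
  shows "qep_hard_case A C b \<longleftrightarrow>
    qep_hard (transpose S1 ** A ** S1) (transpose S1 *v b0_of A C b) (gamma_of C b)"
proof -
  define H where "H = transpose S1 ** A ** S1"
  define g0 where "g0 = transpose S1 *v b0_of A C b"
  have feasible: "qep_feasible A C b lam z \<longleftrightarrow> (\<exists>y. z = S1 *v y \<and> qep_pair H g0 (gamma_of C b) lam y)"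
    for lam z unfolding H_def g0_def by (rule qep_feasible_iff_qep_pair[OF assms])
  have "S1 *v u = S1 *v v \<longleftrightarrow> u = v" for u v by (metis orthonormal_columns_left_inverse[OF orth])
  hence "qep_feasible A C b lam (S1 *v y) \<longleftrightarrow> qep_pair H g0 (gamma_of C b) lam y" for lam y
    unfolding feasible by simp
  moreover have "(\<forall>mu w. qep_feasible A C b mu w \<longrightarrow> lam \<le> mu) \<longleftrightarrow>
      (\<forall>mu w. qep_pair H g0 (gamma_of C b) mu w \<longrightarrow> lam \<le> mu)" for lam
    unfolding feasible by blast
  ultimately have minimizer: "qep_minimizer A C b lam (S1 *v y) \<longleftrightarrow>
      qep_pair H g0 (gamma_of C b) lam y \<and> (\<forall>mu w. qep_pair H g0 (gamma_of C b) mu w \<longrightarrow> lam \<le> mu)"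
    for lam y unfolding qep_minimizer_def by blast
  have dot: "b0_of A C b \<bullet> (S1 *v y) = g0 \<bullet> y" for y
    unfolding g0_def
    by (subst b0_of_eq_orthonormal_basis[OF assms]) (simp add: orthonormal_columns_inner[OF orth])
  show ?thesis
    unfolding qep_hard_case_def qep_hard_def H_def[symmetric] g0_def[symmetric]
  proof
    assume "\<exists>lam z. qep_minimizer A C b lam z \<and> b0_of A C b \<bullet> z = 0"
    then obtain lam z where z: "qep_minimizer A C b lam z" "b0_of A C b \<bullet> z = 0" by blast
    then obtain y where "z = S1 *v y" unfolding qep_minimizer_def feasible by blast
    with z have "qep_minimizer A C b lam (S1 *v y)" and "b0_of A C b \<bullet> (S1 *v y) = 0" by simp_all
    thus "\<exists>lam y. qep_pair H g0 (gamma_of C b) lam y \<and>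
        (\<forall>mu w. qep_pair H g0 (gamma_of C b) mu w \<longrightarrow> lam \<le> mu) \<and> g0 \<bullet> y = 0"
      unfolding minimizer dot by blast
  next
    assume "\<exists>lam y. qep_pair H g0 (gamma_of C b) lam y \<and>
        (\<forall>mu w. qep_pair H g0 (gamma_of C b) mu w \<longrightarrow> lam \<le> mu) \<and> g0 \<bullet> y = 0"
    then obtain lam y where "qep_minimizer A C b lam (S1 *v y)" and "b0_of A C b \<bullet> (S1 *v y) = 0"
      unfolding minimizer dot by blast
    thus "\<exists>lam z. qep_minimizer A C b lam z \<and> b0_of A C b \<bullet> z = 0" by blast
  qed
qed

theorem theorem2p12:
  fixes A :: "real^'n^'n" and C :: "real^'m^'n" and b :: "real^'m"
    and S1 :: "real^'k^'n"
  assumes "transpose A = A"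
    and "CARD('m) < CARD('n)"
    and "rank C = CARD('m)"
    and "norm (n0_of C b) < 1"
    and "b0_of A C b \<noteq> 0"
    and "transpose S1 ** S1 = mat 1"
    and "range (\<lambda>y. S1 *v y) = {x. transpose C *v x = 0}"
  shows "qep_hard_case A C b \<longleftrightarrow>
    (let H = transpose S1 ** A ** S1; g0 = transpose S1 *v b0_of A C b in
      (\<forall>u \<in> eigenspace_of H (lambda_min H). g0 \<bullet> u = 0) \<and>
      norm (mp_inverse (H - lambda_min H *\<^sub>R mat 1) *v g0) \<le> gamma_of C b)"
proof -
  define H where "H = transpose S1 ** A ** S1"
  define g0 where "g0 = transpose S1 *v b0_of A C b"
  have "transpose H = H" using assms(1) by (simp add: H_def matrix_transpose_mul matrix_mul_assoc)
  moreover have "0 < gamma_of C b"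
    using assms(4) by (simp add: gamma_of_def power_less_one_iff abs_square_less_1)
  moreover have "g0 \<noteq> 0"
    using b0_of_eq_orthonormal_basis[OF assms(3,6,7), where A = A and b = b] assms(5)
    by (auto simp: g0_def)
  ultimately have "qep_hard H g0 (gamma_of C b) \<longleftrightarrow> (\<forall>u \<in> eigenspace_of H (lambda_min H). g0 \<bullet> u = 0) \<and>
      norm (mp_inverse (H - lambda_min H *\<^sub>R mat 1) *v g0) \<le> gamma_of C b"
    by (rule qep_hard_iff)
  thus ?thesis using qep_hard_case_iff_qep_hard[OF assms(3,6,7)] by (simp add: H_def g0_def Let_def)
qed

end
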